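(* Let $d\ge 7$ and let $G$ be a $d$-regular graph with girth $g(G)=5$. If there exists a vertex $x\in V(G)$ that is contained in at most $5$ cycles of length $6$ of the induced subgraph $G[N_2[x]]$, then $\chi_b(G)=d+1$.
   Context: $N_2[x]$ is the set of vertices at distance at most $2$ from $x$, and $G[N_2[x]]$ is the subgraph induced by it. A proper $k$-coloring is a b-coloring if every color class contains a vertex whose closed neighborhood contains all $k$ colors; $\chi_b(G)$ is the largest $k$ for which $G$ has a b-coloring with $k$ colors. *)

theory Defs
  imports Main "HOL-Library.Extended_Nat"
begin

definition simple_graph :: "'a set \<Rightarrow> 'a set set \<Rightarrow> bool" where
  "simple_graph V E \<longleftrightarrow> finite V \<and> (\<forall>e\<in>E. \<exists>u v. e = {u, v} \<and> u \<noteq> v \<and> u \<in> V \<and> v \<in> V)"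

definition adj :: "'a set set \<Rightarrow> 'a \<Rightarrow> 'a \<Rightarrow> bool" where
  "adj E u v \<longleftrightarrow> {u, v} \<in> E"

definition neighbors :: "'a set \<Rightarrow> 'a set set \<Rightarrow> 'a \<Rightarrow> 'a set" where
  "neighbors V E v = {u \<in> V. adj E v u}"

definition closed_nbhd :: "'a set \<Rightarrow> 'a set set \<Rightarrow> 'a \<Rightarrow> 'a set" where
  "closed_nbhd V E v = insert v (neighbors V E v)"

definition regular :: "'a set \<Rightarrow> 'a set set \<Rightarrow> nat \<Rightarrow> bool" where
  "regular V E d \<longleftrightarrow> (\<forall>v\<in>V. card (neighbors V E v) = d)"

text \<open>A cycle of length k (k \<ge> 3) in (V,E), identified with its edge set:
  the edges of a closed walk through k distinct vertices.\<close>

definition cycle_edges :: "'a list \<Rightarrow> 'a set set" where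
  "cycle_edges vs = {{vs ! i, vs ! ((i + 1) mod length vs)} | i. i < length vs}"

definition is_cycle :: "'a set \<Rightarrow> 'a set set \<Rightarrow> nat \<Rightarrow> 'a set set \<Rightarrow> bool" where
  "is_cycle V E k C \<longleftrightarrow> k \<ge> 3 \<and> (\<exists>vs. length vs = k \<and> distinct vs \<and> set vs \<subseteq> V \<and>
      cycle_edges vs \<subseteq> E \<and> C = cycle_edges vs)"

definition cycles :: "'a set \<Rightarrow> 'a set set \<Rightarrow> nat \<Rightarrow> 'a set set set" where
  "cycles V E k = {C. is_cycle V E k C}"

text \<open>Girth: length of a shortest cycle (\<infinity> if acyclic).\<close>

definition girth :: "'a set \<Rightarrow> 'a set set \<Rightarrow> enat" where
  "girth V E = Inf {enat k | k. cycles V E k \<noteq> {}}"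

definition ball2 :: "'a set \<Rightarrow> 'a set set \<Rightarrow> 'a \<Rightarrow> 'a set" where
  "ball2 V E x = {v \<in> V. v = x \<or> adj E x v \<or> (\<exists>w\<in>V. adj E x w \<and> adj E w v)}"

definition induced_edges :: "'a set set \<Rightarrow> 'a set \<Rightarrow> 'a set set" where
  "induced_edges E S = {e \<in> E. e \<subseteq> S}"

definition proper_coloring :: "'a set \<Rightarrow> 'a set set \<Rightarrow> nat \<Rightarrow> ('a \<Rightarrow> nat) \<Rightarrow> bool" where
  "proper_coloring V E k c \<longleftrightarrow> (\<forall>v\<in>V. c v < k) \<and> (\<forall>u\<in>V. \<forall>v\<in>V. adj E u v \<longrightarrow> c u \<noteq> c v)"

definition b_coloring :: "'a set \<Rightarrow> 'a set set \<Rightarrow> nat \<Rightarrow> ('a \<Rightarrow> nat) \<Rightarrow> bool" where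
  "b_coloring V E k c \<longleftrightarrow> proper_coloring V E k c \<and>
     (\<forall>i<k. \<exists>v\<in>V. c v = i \<and> {0..<k} \<subseteq> c ` closed_nbhd V E v)"

definition b_chromatic :: "'a set \<Rightarrow> 'a set set \<Rightarrow> nat" where
  "b_chromatic V E = (GREATEST k. \<exists>c. b_coloring V E k c)"

end

theory Submission
  imports Defs
begin

text \<open>Colour x with 0 and its d neighbours bijectively with 1..d. As the girth is 5, the vertices
  at distance 2 from x split into the blocks N(y) - {x}, y \<in> N(x), each of size d - 1. If every
  block N(y) - {x} receives exactly the colours {1..d} - {\<kappa> y}, then x and all its neighbours are
  b-vertices, and a greedy extension to the remaining vertices yields a b-colouring with d + 1
  colours; more colours are impossible in a d-regular graph.

  The blocks are coloured one after another by Hall's theorem. Two neighbours of a vertex u at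
  distance 2 that are themselves at distance 2 close a 6-cycle through x, and distinct such pairs
  give distinct cycles. Hence at most five vertices at distance 2 have two such neighbours and none
  has four. This bounds the colours that a vertex of the current block sees in earlier blocks well
  enough for Hall's condition to hold, provided the only block that may contain four such vertices
  is coloured first.\<close>

section \<open>Hall's theorem\<close>

lemma hall_condition_remove_element:
  fixes A :: "'i \<Rightarrow> 'c set"
  assumes fin: "finite I" "\<forall>i\<in>I. finite (A i)"
    and surplus: "\<forall>J\<subseteq>I. J \<noteq> {} \<and> J \<noteq> I \<longrightarrow> card J < card (\<Union>(A ` J))"
    and i: "i \<in> I"
  shows "\<forall>J\<subseteq>I - {i}. card J \<le> card (\<Union>j\<in>J. A j - {a})"
proof (intro allI impI)
  fix J assume J: "J \<subseteq> I - {i}"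
  show "card J \<le> card (\<Union>j\<in>J. A j - {a})"
  proof (cases "J = {}")
    case False
    then have "card J < card (\<Union>(A ` J))" using surplus J i by blast
    moreover have "finite (\<Union>(A ` J))" using J fin finite_subset by blast
    then have "card (\<Union>(A ` J)) \<le> card (\<Union>(A ` J) - {a}) + 1"
      by (cases "a \<in> \<Union>(A ` J)") (auto simp: card_Diff_singleton_if)
    moreover have "(\<Union>j\<in>J. A j - {a}) = \<Union>(A ` J) - {a}" by auto
    ultimately show ?thesis by simp
  qed simp
qed

lemma hall_condition_contract:
  fixes A :: "'i \<Rightarrow> 'c set"
  assumes fin: "finite I" "\<forall>i\<in>I. finite (A i)"
    and hall: "\<forall>J\<subseteq>I. card J \<le> card (\<Union>(A ` J))"
    and K: "K \<subseteq> I" "card (\<Union>(A ` K)) \<le> card K"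
  shows "\<forall>J\<subseteq>I - K. card J \<le> card (\<Union>j\<in>J. A j - \<Union>(A ` K))"
proof (intro allI impI)
  fix J assume J: "J \<subseteq> I - K"
  have "finite J" "finite K" using J K(1) fin(1) finite_subset by blast+
  then have "card J + card K = card (J \<union> K)" using J by (subst card_Un_disjoint) auto
  also have "\<dots> \<le> card (\<Union>(A ` (J \<union> K)))" by (rule hall[rule_format]) (use J K(1) in blast)
  also have "\<Union>(A ` (J \<union> K)) = (\<Union>j\<in>J. A j - \<Union>(A ` K)) \<union> \<Union>(A ` K)" by auto
  also have "card \<dots> \<le> card (\<Union>j\<in>J. A j - \<Union>(A ` K)) + card (\<Union>(A ` K))" by (rule card_Un_le)
  finally show "card J \<le> card (\<Union>j\<in>J. A j - \<Union>(A ` K))" using K(2) by linarith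
qed

lemma system_of_representatives_insert:
  assumes "inj_on f I" "\<forall>j\<in>I. f j \<in> A j - {a}" "a \<in> A i"
  shows "inj_on (f(i := a)) (insert i I) \<and> (\<forall>j\<in>insert i I. (f(i := a)) j \<in> A j)"
proof
  show "inj_on (f(i := a)) (insert i I)"
  proof (rule inj_onI)
    fix j j' assume "j \<in> insert i I" "j' \<in> insert i I" "(f(i := a)) j = (f(i := a)) j'"
    then show "j = j'"
      using assms(2) inj_onD[OF assms(1)] by (cases "j = i"; cases "j' = i") force+
  qed
qed (use assms(2,3) in auto)

lemma system_of_representatives_Un:
  assumes f: "inj_on f K" "\<forall>j\<in>K. f j \<in> A j"
    and g: "inj_on g L" "\<forall>j\<in>L. g j \<in> A j - \<Union>(A ` K)"
  defines "h \<equiv> \<lambda>j. if j \<in> K then f j else g j"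
  shows "inj_on h (K \<union> L) \<and> (\<forall>j\<in>K \<union> L. h j \<in> A j)"
proof
  have h_K: "h j \<in> \<Union>(A ` K) \<longleftrightarrow> j \<in> K" if "j \<in> K \<union> L" for j
    using f(2) g(2) that by (auto simp: h_def)
  show "inj_on h (K \<union> L)"
  proof (rule inj_onI)
    fix j j' assume j: "j \<in> K \<union> L" "j' \<in> K \<union> L" "h j = h j'"
    then have "j \<in> K \<longleftrightarrow> j' \<in> K" using h_K by metis
    then show "j = j'"
      using j inj_onD[OF f(1)] inj_onD[OF g(1)] by (cases "j \<in> K") (auto simp: h_def)
  qed
qed (use f(2) g(2) in \<open>auto simp: h_def\<close>)

theorem hall_marriage:
  fixes A :: "'i \<Rightarrow> 'c set"
  assumes "finite I" "\<forall>i\<in>I. finite (A i)" "\<forall>J\<subseteq>I. card J \<le> card (\<Union>(A ` J))"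
  shows "\<exists>f. inj_on f I \<and> (\<forall>i\<in>I. f i \<in> A i)"
  using assms
proof (induction "card I" arbitrary: I A rule: less_induct)
  case less
  note fin = less.prems(1,2) and hall = less.prems(3)
  show ?case
  proof (cases "\<forall>J\<subseteq>I. J \<noteq> {} \<and> J \<noteq> I \<longrightarrow> card J < card (\<Union>(A ` J))")
    case True
    show ?thesis
    proof (cases "I = {}")
      case False
      then obtain i where i: "i \<in> I" by blast
      then have "1 \<le> card (A i)" using hall[rule_format, of "{i}"] by simp
      then obtain a where a: "a \<in> A i" by fastforce
      have "card (I - {i}) < card I" using fin(1) i by (rule card_Diff1_less)
      then have "\<exists>f. inj_on f (I - {i}) \<and> (\<forall>j\<in>I - {i}. f j \<in> A j - {a})"
        by (rule less.hyps) (use fin hall_condition_remove_element[OF fin True i] in simp_all)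
      then obtain f where f: "inj_on f (I - {i})" "\<forall>j\<in>I - {i}. f j \<in> A j - {a}" by blast
      show ?thesis
        using system_of_representatives_insert[OF f a] unfolding insert_Diff[OF i] by blast
    qed simp
  next
    case False
    then obtain K where K: "K \<subseteq> I" "K \<noteq> {}" "K \<noteq> I" "card (\<Union>(A ` K)) \<le> card K"
      by (auto simp: not_less)
    have "card K < card I" "card (I - K) < card I"
      using K fin(1) by (auto intro!: psubset_card_mono)
    have "\<exists>f. inj_on f K \<and> (\<forall>j\<in>K. f j \<in> A j)"
      by (rule less.hyps[OF \<open>card K < card I\<close> finite_subset[OF K(1) fin(1)]])
        (use K(1) fin(2) hall in blast)+
    then obtain f where f: "inj_on f K" "\<forall>j\<in>K. f j \<in> A j" by blast
    have "\<exists>g. inj_on g (I - K) \<and> (\<forall>j\<in>I - K. g j \<in> A j - \<Union>(A ` K))"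
      by (rule less.hyps[OF \<open>card (I - K) < card I\<close>])
        (use fin hall_condition_contract[OF fin hall K(1,4)] in simp_all)
    then obtain g where g: "inj_on g (I - K)" "\<forall>j\<in>I - K. g j \<in> A j - \<Union>(A ` K)" by blast
    have "K \<union> (I - K) = I" using K(1) by blast
    then show ?thesis using system_of_representatives_Un[OF f g] by auto
  qed
qed

section \<open>Cycles and colourings of simple graphs\<close>

lemma adj_commute: "adj E u v = adj E v u"
  by (simp add: adj_def insert_commute)

lemma simple_graph_adjD:
  assumes "simple_graph V E" "adj E u v"
  shows "u \<in> V" "v \<in> V" "u \<noteq> v"
proof -
  obtain a b where "{u, v} = {a, b}" "a \<noteq> b" "a \<in> V" "b \<in> V"
    using assms unfolding simple_graph_def adj_def by blast
  then show "u \<in> V" "v \<in> V" "u \<noteq> v" by (auto simp: doubleton_eq_iff)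
qed

lemma simple_graph_finite_edges: "simple_graph V E \<Longrightarrow> finite E"
  unfolding simple_graph_def by (rule finite_subset[of _ "Pow V"]) auto

lemma finite_neighbors: "simple_graph V E \<Longrightarrow> finite (neighbors V E v)"
  unfolding simple_graph_def neighbors_def by simp

lemma cycle_edges_eq_image: "cycle_edges vs = (\<lambda>i. {vs ! i, vs ! ((i + 1) mod length vs)}) ` {..<length vs}"
  by (auto simp: cycle_edges_def)

lemma cycle_edges_3: "cycle_edges [a, b, c] = {{a, b}, {b, c}, {c, a}}"
proof -
  have "{..<Suc (Suc (Suc 0))} = {0, 1, 2}" by auto
  then show ?thesis by (simp add: cycle_edges_eq_image)
qed

lemma cycle_edges_4: "cycle_edges [a, b, c, e] = {{a, b}, {b, c}, {c, e}, {e, a}}"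
proof -
  have "{..<Suc (Suc (Suc (Suc 0)))} = {0, 1, 2, 3}" by auto
  then show ?thesis by (simp add: cycle_edges_eq_image)
qed

lemma cycle_edges_6:
  "cycle_edges [a, b, c, e, f, g] = {{a, b}, {b, c}, {c, e}, {e, f}, {f, g}, {g, a}}"
proof -
  have "{..<Suc (Suc (Suc (Suc (Suc (Suc 0)))))} = {0, 1, 2, 3, 4, 5}" by auto
  then show ?thesis by (simp add: cycle_edges_eq_image)
qed

lemma cycle_edges_in_cycles:
  assumes "length vs = k" "3 \<le> k" "distinct vs" "set vs \<subseteq> V" "cycle_edges vs \<subseteq> E"
  shows "cycle_edges vs \<in> cycles V E k"
  using assms unfolding cycles_def is_cycle_def by blast

lemma cycles_below_girth: "enat k < girth V E \<Longrightarrow> cycles V E k = {}"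
  unfolding girth_def by (metis (mono_tags, lifting) Inf_lower mem_Collect_eq not_le)

lemma no_triangle:
  assumes "simple_graph V E" "cycles V E 3 = {}" "adj E a b" "adj E b c" "adj E c a"
  shows False
proof -
  have "a \<noteq> b" "b \<noteq> c" "c \<noteq> a" "a \<in> V" "b \<in> V" "c \<in> V"
    using simple_graph_adjD[OF assms(1)] assms(3-5) by blast+
  then have "distinct [a, b, c]" "set [a, b, c] \<subseteq> V" by auto
  moreover have "cycle_edges [a, b, c] \<subseteq> E"
    using assms(3-5) by (simp add: cycle_edges_3 adj_def)
  ultimately have "cycle_edges [a, b, c] \<in> cycles V E 3"
    by (intro cycle_edges_in_cycles) auto
  then show False using assms(2) by simp
qed

lemma no_quadrilateral:
  assumes "simple_graph V E" "cycles V E 4 = {}"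
    and "adj E a b" "adj E b c" "adj E c e" "adj E e a" "a \<noteq> c" "b \<noteq> e"
  shows False
proof -
  have "a \<noteq> b" "b \<noteq> c" "c \<noteq> e" "e \<noteq> a" "a \<in> V" "b \<in> V" "c \<in> V" "e \<in> V"
    using simple_graph_adjD[OF assms(1)] assms(3-6) by blast+
  then have "distinct [a, b, c, e]" "set [a, b, c, e] \<subseteq> V" using assms(7,8) by auto
  moreover have "cycle_edges [a, b, c, e] \<subseteq> E"
    using assms(3-6) by (simp add: cycle_edges_4 adj_def)
  ultimately have "cycle_edges [a, b, c, e] \<in> cycles V E 4"
    by (intro cycle_edges_in_cycles) auto
  then show False using assms(2) by simp
qed

lemma star_edges_Inter_Union:
  assumes "card p = 2" "u \<notin> p"
  shows "\<Inter>((\<lambda>z. {z, u}) ` p) = {u}" "\<Union>((\<lambda>z. {z, u}) ` p) - {u} = p"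
proof -
  obtain a b where "p = {a, b}" "a \<noteq> b" using assms(1) by (meson card_2_iff)
  then show "\<Inter>((\<lambda>z. {z, u}) ` p) = {u}" "\<Union>((\<lambda>z. {z, u}) ` p) - {u} = p"
    using assms(2) by auto
qed

lemma b_coloring_le_max_degree:
  assumes "simple_graph V E" "\<forall>v\<in>V. card (neighbors V E v) \<le> d" "b_coloring V E k c"
  shows "k \<le> d + 1"
proof (cases "k = 0")
  case False
  then obtain v where v: "v \<in> V" "{0..<k} \<subseteq> c ` closed_nbhd V E v"
    using assms(3) unfolding b_coloring_def by auto
  have fin: "finite (closed_nbhd V E v)"
    using finite_neighbors[OF assms(1)] by (simp add: closed_nbhd_def)
  have "k \<le> card (c ` closed_nbhd V E v)" using card_mono[OF finite_imageI[OF fin] v(2)] by simp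
  also have "\<dots> \<le> card (closed_nbhd V E v)" using fin by (rule card_image_le)
  also have "\<dots> \<le> card (neighbors V E v) + 1" by (simp add: closed_nbhd_def card_insert_le_m1 card_insert_if)
  finally show ?thesis using assms(2) v(1) by fastforce
qed simp

definition proper_on :: "'a set set \<Rightarrow> nat \<Rightarrow> 'a set \<Rightarrow> ('a \<Rightarrow> nat) \<Rightarrow> bool" where
  "proper_on E k S c \<longleftrightarrow> (\<forall>v\<in>S. c v < k) \<and> (\<forall>u\<in>S. \<forall>v\<in>S. adj E u v \<longrightarrow> c u \<noteq> c v)"

lemma proper_coloring_iff_proper_on: "proper_coloring V E k c \<longleftrightarrow> proper_on E k V c"
  by (simp add: proper_coloring_def proper_on_def)

lemma proper_on_insert:
  assumes G: "simple_graph V E" "\<forall>v\<in>V. card (neighbors V E v) \<le> d"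
    and c: "proper_on E (d + 1) S c" and v: "v \<in> V" "v \<notin> S"
  shows "\<exists>k. proper_on E (d + 1) (insert v S) (c(v := k))"
proof -
  define used where "used = c ` (neighbors V E v \<inter> S)"
  have fin: "finite (neighbors V E v)" using G(1) by (rule finite_neighbors)
  have "card used \<le> card (neighbors V E v \<inter> S)"
    unfolding used_def using fin by (intro card_image_le) simp
  also have "\<dots> \<le> d" using fin G(2) v(1) by (meson card_mono inf_le1 le_trans)
  finally have "\<not> {0..<d + 1} \<subseteq> used"
    using card_mono[of used "{0..<d + 1}"] fin by (auto simp: used_def)
  then obtain k where k: "k < d + 1" "k \<notin> used" by (auto simp: subset_iff)
  have "(c(v := k)) u \<noteq> (c(v := k)) w" if uw: "u \<in> insert v S" "w \<in> insert v S" "adj E u w" for u w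
  proof -
    have "u \<noteq> w" using simple_graph_adjD(3)[OF G(1) uw(3)] .
    moreover have "w \<in> neighbors V E u" "u \<in> neighbors V E w"
      using simple_graph_adjD(1,2)[OF G(1) uw(3)] uw(3) adj_commute[of E u w]
      by (auto simp: neighbors_def)
    ultimately show ?thesis
      using uw c v(2) k(2) by (auto simp: proper_on_def used_def)
  qed
  then have "proper_on E (d + 1) (insert v S) (c(v := k))"
    using c k(1) by (auto simp: proper_on_def)
  then show ?thesis ..
qed

lemma proper_on_extend:
  assumes G: "simple_graph V E" "\<forall>v\<in>V. card (neighbors V E v) \<le> d"
    and c: "proper_on E (d + 1) S c" "S \<subseteq> V"
  shows "\<exists>c'. (\<forall>v\<in>S. c' v = c v) \<and> proper_coloring V E (d + 1) c'"
proof -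
  have "\<exists>c'. (\<forall>v\<in>S. c' v = c v) \<and> proper_on E (d + 1) (S \<union> R) c'"
    if "finite R" "R \<subseteq> V - S" for R
    using that
  proof (induction R rule: finite_subset_induct')
    case (insert v R)
    then obtain c' where "\<forall>v\<in>S. c' v = c v" "proper_on E (d + 1) (S \<union> R) c'" by blast
    moreover obtain k where "proper_on E (d + 1) (insert v (S \<union> R)) (c'(v := k))"
      using proper_on_insert[OF G calculation(2)] insert by blast
    ultimately have "(\<forall>u\<in>S. (c'(v := k)) u = c u) \<and> proper_on E (d + 1) (S \<union> insert v R) (c'(v := k))"
      using insert.hyps by auto
    then show ?case by blast
  qed (use c in auto)
  moreover have "finite (V - S)" using G(1) by (simp add: simple_graph_def)
  ultimately show ?thesis
    using c(2) by (metis Diff_partition order_refl proper_coloring_iff_proper_on)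
qed

section \<open>The second neighbourhood of a vertex in a graph of girth 5\<close>

locale girth5_centre =
  fixes V :: "'a set" and E :: "'a set set" and d :: nat and x :: 'a
  assumes simple: "simple_graph V E" and regular: "regular V E d"
    and no_C3: "cycles V E 3 = {}" and no_C4: "cycles V E 4 = {}" and centre: "x \<in> V"
begin

lemma adjD: "adj E u v \<Longrightarrow> u \<in> V" "adj E u v \<Longrightarrow> v \<in> V" "adj E u v \<Longrightarrow> u \<noteq> v"
  using simple_graph_adjD[OF simple] by blast+

lemma finite_vertices: "finite V"
  using simple by (simp add: simple_graph_def)

lemma triangle_free: "adj E a b \<Longrightarrow> adj E b c \<Longrightarrow> adj E c a \<Longrightarrow> False"
  using no_triangle[OF simple no_C3] by blast

lemma quadrilateral_free:
  "adj E a b \<Longrightarrow> adj E b c \<Longrightarrow> adj E c e \<Longrightarrow> adj E e a \<Longrightarrow> a \<noteq> c \<Longrightarrow> b \<noteq> e \<Longrightarrow> False"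
  using no_quadrilateral[OF simple no_C4] by blast

definition sphere1 :: "'a set" where
  "sphere1 = neighbors V E x"

definition sphere2 :: "'a set" where
  "sphere2 = ball2 V E x - insert x sphere1"

definition block :: "'a \<Rightarrow> 'a set" where
  "block y = neighbors V E y - {x}"

definition inner_nbrs :: "'a \<Rightarrow> 'a set" where
  "inner_nbrs u = neighbors V E u \<inter> sphere2"

lemma mem_sphere1: "y \<in> sphere1 \<longleftrightarrow> adj E x y"
  unfolding sphere1_def neighbors_def using adjD by blast

lemma finite_sphere1: "finite sphere1"
  unfolding sphere1_def using finite_neighbors[OF simple] .

lemma card_sphere1: "card sphere1 = d"
  using regular centre unfolding regular_def sphere1_def by blast

lemma centre_notin_sphere1: "x \<notin> sphere1"
  using mem_sphere1 adjD by blast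

lemma mem_sphere2: "z \<in> sphere2 \<longleftrightarrow> z \<noteq> x \<and> \<not> adj E x z \<and> (\<exists>y\<in>sphere1. adj E y z)"
  unfolding sphere2_def ball2_def using mem_sphere1 adjD by blast

lemma finite_sphere2: "finite sphere2"
  unfolding sphere2_def ball2_def using finite_vertices by simp

lemma sphere2_disjoint: "z \<in> sphere2 \<Longrightarrow> z \<noteq> x \<and> z \<notin> sphere1"
  unfolding sphere2_def by blast

lemma ball2_eq: "ball2 V E x = insert x (sphere1 \<union> sphere2)"
  unfolding sphere2_def using centre by (auto simp: ball2_def sphere1_def neighbors_def)

lemma mem_block: "z \<in> block y \<longleftrightarrow> adj E y z \<and> z \<noteq> x"
  unfolding block_def neighbors_def using adjD by blast

lemma finite_block: "finite (block y)"
  unfolding block_def using finite_neighbors[OF simple] by simp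

lemma neighbors_sphere1: "y \<in> sphere1 \<Longrightarrow> neighbors V E y = insert x (block y)"
  using centre mem_sphere1 adj_commute unfolding block_def neighbors_def by fastforce

lemma card_block:
  assumes "y \<in> sphere1"
  shows "card (block y) = d - 1"
proof -
  have "card (insert x (block y)) = d"
    using assms regular adjD(2) mem_sphere1 neighbors_sphere1 unfolding regular_def by metis
  moreover have "x \<notin> block y" by (simp add: block_def)
  ultimately show ?thesis using finite_block by simp
qed

lemma block_subset_sphere2:
  assumes "y \<in> sphere1"
  shows "block y \<subseteq> sphere2"
proof
  fix z assume "z \<in> block y"
  then have "adj E y z" "z \<noteq> x" by (simp_all add: mem_block)
  moreover have "adj E x y" using assms by (simp add: mem_sphere1)
  ultimately have "\<not> adj E x z" using triangle_free[of x y z] adj_commute[of E x z] by blast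
  then show "z \<in> sphere2" using assms \<open>adj E y z\<close> \<open>z \<noteq> x\<close> by (auto simp: mem_sphere2)
qed

lemma sphere2_eq_UN_block: "sphere2 = (\<Union>y\<in>sphere1. block y)"
  using block_subset_sphere2 by (auto simp: mem_sphere2 mem_block)

lemma block_disjoint:
  assumes "y \<in> sphere1" "y' \<in> sphere1" "y \<noteq> y'"
  shows "block y \<inter> block y' = {}"
proof (rule ccontr)
  assume "block y \<inter> block y' \<noteq> {}"
  then obtain z where "adj E y z" "adj E y' z" "z \<noteq> x" by (auto simp: mem_block)
  moreover have "adj E x y" "adj E x y'" using assms by (simp_all add: mem_sphere1)
  ultimately show False
    using quadrilateral_free[of x y z y'] assms(3) adj_commute by metis
qed

lemma block_independent:
  assumes "y \<in> sphere1" "z \<in> block y" "w \<in> block y"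
  shows "\<not> adj E z w"
  using assms triangle_free[of y z w] adj_commute[of E w y] by (auto simp: mem_block)

lemma block_unique_neighbor:
  assumes "v \<noteq> y" "u \<in> block y" "u' \<in> block y" "adj E v u" "adj E v u'"
  shows "u = u'"
proof (rule ccontr)
  assume "u \<noteq> u'"
  moreover have "adj E u y" "adj E y u'" using assms(2,3) adj_commute by (metis mem_block)+
  ultimately show False
    using quadrilateral_free[of v u y u'] assms(1,4,5) adj_commute by metis
qed

definition parent :: "'a \<Rightarrow> 'a" where
  "parent z = (SOME y. y \<in> sphere1 \<and> adj E y z)"

lemma parent_spec: "z \<in> sphere2 \<Longrightarrow> parent z \<in> sphere1 \<and> adj E (parent z) z"
  unfolding parent_def by (rule someI_ex) (auto simp: mem_sphere2)

definition hexagons :: "'a set set set" where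
  "hexagons = {C \<in> cycles (ball2 V E x) (induced_edges E (ball2 V E x)) 6. x \<in> \<Union>C}"

text \<open>For p = {z, w} this is the 6-cycle x, parent z, z, u, w, parent w, written
  symmetrically in z and w.\<close>

definition hexagon :: "'a \<Rightarrow> 'a set \<Rightarrow> 'a set set" where
  "hexagon u p = (\<Union>z\<in>p. {{x, parent z}, {parent z, z}, {z, u}})"

lemma finite_hexagons: "finite hexagons"
proof (rule finite_subset)
  show "hexagons \<subseteq> Pow E"
    by (auto simp: hexagons_def cycles_def is_cycle_def induced_edges_def)
  show "finite (Pow E)" using simple_graph_finite_edges[OF simple] by simp
qed

lemma hexagon_mem_hexagons:
  assumes u: "u \<in> sphere2" and zw: "z \<in> inner_nbrs u" "w \<in> inner_nbrs u" "z \<noteq> w"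
  shows "hexagon u {z, w} \<in> hexagons"
proof -
  define a b where "a = parent z" and "b = parent w"
  have z: "z \<in> sphere2" "adj E u z" and w: "w \<in> sphere2" "adj E u w"
    using zw by (auto simp: inner_nbrs_def neighbors_def)
  have a: "a \<in> sphere1" "adj E a z" and b: "b \<in> sphere1" "adj E b w"
    using parent_spec z(1) w(1) by (auto simp: a_def b_def)
  have "a \<noteq> u" using a(1) sphere2_disjoint[OF u] by blast
  then have "a \<noteq> b"
    using quadrilateral_free[of a z u w] a(2) b(2) z(2) w(2) zw(3) adj_commute by metis
  moreover have "u \<noteq> z" "u \<noteq> w" using z(2) w(2) adjD(3) by blast+
  moreover have "x \<notin> sphere2" "a \<notin> sphere2" "b \<notin> sphere2" "x \<noteq> a" "x \<noteq> b"
    using a(1) b(1) sphere2_disjoint centre_notin_sphere1 by blast+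
  ultimately have "distinct [x, a, z, u, w, b]"
    using u z(1) w(1) zw(3) by auto
  moreover have "set [x, a, z, u, w, b] \<subseteq> ball2 V E x"
    using a(1) b(1) u z(1) w(1) by (auto simp: ball2_eq)
  moreover have "cycle_edges [x, a, z, u, w, b] \<subseteq> E"
  proof -
    have "adj E x a" "adj E a z" "adj E z u" "adj E u w" "adj E w b" "adj E b x"
      using a b z(2) w(2) adj_commute[of E] by (simp_all add: mem_sphere1)
    then show ?thesis by (auto simp: cycle_edges_6 adj_def)
  qed
  ultimately have "cycle_edges [x, a, z, u, w, b] \<in> cycles (ball2 V E x) (induced_edges E (ball2 V E x)) 6"
    by (intro cycle_edges_in_cycles) (auto simp: cycle_edges_6 induced_edges_def)
  moreover have "hexagon u {z, w} = cycle_edges [x, a, z, u, w, b]"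
    by (auto simp: hexagon_def cycle_edges_6 a_def b_def insert_commute)
  ultimately show ?thesis by (auto simp: hexagons_def cycle_edges_6)
qed

lemma hexagon_edges_in_sphere2:
  assumes "u \<in> sphere2" "p \<subseteq> sphere2"
  shows "{e \<in> hexagon u p. e \<subseteq> sphere2} = (\<lambda>z. {z, u}) ` p"
  using assms parent_spec sphere2_disjoint by (fastforce simp: hexagon_def)

lemma inj_on_hexagon:
  "inj_on (\<lambda>(u, p). hexagon u p) (SIGMA u:sphere2. {p. p \<subseteq> inner_nbrs u \<and> card p = 2})"
proof (rule inj_onI, clarsimp)
  fix u p u' p'
  assume u: "u \<in> sphere2" "p \<subseteq> inner_nbrs u" "card p = 2"
    and u': "u' \<in> sphere2" "p' \<subseteq> inner_nbrs u'" "card p' = 2"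
    and eq: "hexagon u p = hexagon u' p'"
  have "p \<subseteq> sphere2" "p' \<subseteq> sphere2" using u(2) u'(2) by (auto simp: inner_nbrs_def)
  then have star: "(\<lambda>z. {z, u}) ` p = (\<lambda>z. {z, u'}) ` p'"
    using hexagon_edges_in_sphere2[OF u(1), of p] hexagon_edges_in_sphere2[OF u'(1), of p']
    unfolding eq by simp
  have "u \<notin> p" "u' \<notin> p'"
    using u(2) u'(2) adjD(3) by (fastforce simp: inner_nbrs_def neighbors_def)+
  note star_u = star_edges_Inter_Union[OF u(3) \<open>u \<notin> p\<close>]
    and star_u' = star_edges_Inter_Union[OF u'(3) \<open>u' \<notin> p'\<close>]
  have "{u} = {u'}" using star_u(1) star_u'(1) star by metis
  moreover have "p = p'" using star_u(2) star_u'(2) star calculation by (metis singleton_inject)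
  ultimately show "u = u' \<and> p = p'" by simp
qed

lemma sum_inner_pairs_le_card_hexagons:
  "(\<Sum>u\<in>sphere2. card (inner_nbrs u) choose 2) \<le> card hexagons"
proof -
  have fin: "finite (inner_nbrs u)" for u
    using finite_sphere2 by (simp add: inner_nbrs_def)
  have "(\<Sum>u\<in>sphere2. card (inner_nbrs u) choose 2)
      = card (SIGMA u:sphere2. {p. p \<subseteq> inner_nbrs u \<and> card p = 2})"
    using finite_sphere2 fin by (simp add: n_subsets)
  also have "\<dots> = card ((\<lambda>(u, p). hexagon u p) ` (SIGMA u:sphere2. {p. p \<subseteq> inner_nbrs u \<and> card p = 2}))"
    using inj_on_hexagon by (simp add: card_image)
  also have "\<dots> \<le> card hexagons"
  proof (rule card_mono[OF finite_hexagons], clarify)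
    fix u p assume "u \<in> sphere2" "p \<subseteq> inner_nbrs u" "card p = 2"
    then show "hexagon u p \<in> hexagons"
      using hexagon_mem_hexagons by (metis card_2_iff insert_subset)
  qed
  finally show ?thesis .
qed

section \<open>Colouring the blocks\<close>

text \<open>As block j has d - 1 vertices, it then carries exactly the colours {1..d} - {\<kappa> j}; this
  is what makes the neighbours of x b-vertices.\<close>

definition block_coloring :: "('a \<Rightarrow> nat) \<Rightarrow> 'a set \<Rightarrow> ('a \<Rightarrow> nat) \<Rightarrow> bool" where
  "block_coloring \<kappa> J \<sigma> \<longleftrightarrow>
     (\<forall>j\<in>J. \<sigma> ` block j \<subseteq> {1..d} - {\<kappa> j} \<and> inj_on \<sigma> (block j)) \<and>
     (\<forall>z\<in>\<Union>(block ` J). \<forall>w\<in>\<Union>(block ` J). adj E z w \<longrightarrow> \<sigma> z \<noteq> \<sigma> w)"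

definition free_colours :: "('a \<Rightarrow> nat) \<Rightarrow> 'a set \<Rightarrow> ('a \<Rightarrow> nat) \<Rightarrow> 'a \<Rightarrow> 'a \<Rightarrow> nat set" where
  "free_colours \<kappa> J \<sigma> i z = {1..d} - {\<kappa> i} - \<sigma> ` (neighbors V E z \<inter> \<Union>(block ` J))"

lemma block_coloring_empty: "block_coloring \<kappa> {} \<sigma>"
  by (simp add: block_coloring_def)

lemma block_coloring_range:
  "block_coloring \<kappa> J \<sigma> \<Longrightarrow> j \<in> J \<Longrightarrow> z \<in> block j \<Longrightarrow> \<sigma> z \<in> {1..d} - {\<kappa> j}"
  unfolding block_coloring_def by blast

lemma block_colours_eq:
  assumes \<sigma>: "block_coloring \<kappa> J \<sigma>" and y: "y \<in> J" "y \<in> sphere1" "\<kappa> y \<in> {1..d}"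
  shows "\<sigma> ` block y = {1..d} - {\<kappa> y}"
proof (rule card_subset_eq)
  have "inj_on \<sigma> (block y)" using \<sigma> y(1) by (simp add: block_coloring_def)
  then show "card (\<sigma> ` block y) = card ({1..d} - {\<kappa> y})"
    using y(2,3) by (simp add: card_image card_block)
qed (use block_coloring_range[OF \<sigma> y(1)] in auto)

lemma card_seen_colours_le_inner_degree:
  assumes "J \<subseteq> sphere1"
  shows "card (\<sigma> ` (neighbors V E z \<inter> \<Union>(block ` J))) \<le> card (inner_nbrs z)"
proof -
  have "finite (inner_nbrs z)" using finite_sphere2 by (simp add: inner_nbrs_def)
  moreover have "neighbors V E z \<inter> \<Union>(block ` J) \<subseteq> inner_nbrs z"
    using assms block_subset_sphere2 by (auto simp: inner_nbrs_def)
  ultimately have "card (neighbors V E z \<inter> \<Union>(block ` J)) \<le> card (inner_nbrs z)"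
    by (rule card_mono)
  moreover have "card (\<sigma> ` (neighbors V E z \<inter> \<Union>(block ` J))) \<le> card (neighbors V E z \<inter> \<Union>(block ` J))"
    by (rule card_image_le) (use finite_neighbors[OF simple] in simp)
  ultimately show ?thesis by linarith
qed

text \<open>Distinct vertices of block i see the colour c in distinct blocks (no 4-cycles), and
  neither block i nor the block of the neighbour of x coloured c is among them.\<close>

lemma card_common_colour_neighbours:
  assumes \<kappa>: "bij_betw \<kappa> sphere1 {1..d}" and \<sigma>: "block_coloring \<kappa> J \<sigma>"
    and J: "J \<subseteq> sphere1" "i \<in> sphere1" "i \<notin> J" and c: "c \<in> {1..d} - {\<kappa> i}"
    and S: "S \<subseteq> block i" "\<forall>z\<in>S. \<exists>j\<in>J. \<exists>u\<in>block j. adj E z u \<and> \<sigma> u = c"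
  shows "card S \<le> d - 2"
proof -
  obtain j where j: "\<forall>z\<in>S. j z \<in> J \<and> (\<exists>u\<in>block (j z). adj E z u \<and> \<sigma> u = c)"
    using bchoice[of S "\<lambda>z j. j \<in> J \<and> (\<exists>u\<in>block j. adj E z u \<and> \<sigma> u = c)"] S(2) by blast
  have "c \<in> \<kappa> ` sphere1" using \<kappa> c by (simp add: bij_betw_def)
  then obtain y where y: "y \<in> sphere1" "\<kappa> y = c" by blast
  have "j ` S \<subseteq> sphere1 - {i, y}"
  proof clarify
    fix z assume "z \<in> S"
    then obtain u where u: "j z \<in> J" "u \<in> block (j z)" "\<sigma> u = c" using j by blast
    then have "\<sigma> u \<noteq> \<kappa> (j z)" using block_coloring_range[OF \<sigma>] by blast
    then show "j z \<in> sphere1 - {i, y}" using u J y(2) by auto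
  qed
  moreover have "inj_on j S"
  proof (rule inj_onI)
    fix z z' assume zz: "z \<in> S" "z' \<in> S" "j z = j z'"
    obtain u where u: "u \<in> block (j z)" "adj E z u" "\<sigma> u = c" using j zz(1) by blast
    obtain u' where u': "u' \<in> block (j z)" "adj E z' u'" "\<sigma> u' = c" using j zz(2) unfolding zz(3) by blast
    have "j z \<in> J" using j zz(1) by blast
    then have "inj_on \<sigma> (block (j z))" using \<sigma> by (simp add: block_coloring_def)
    then have "u = u'" using u u' by (simp add: inj_on_def)
    moreover have "u \<in> sphere2" using u(1) \<open>j z \<in> J\<close> J(1) block_subset_sphere2 by blast
    then have "u \<noteq> i" using J(2) sphere2_disjoint by blast
    ultimately show "z = z'"
      using block_unique_neighbor[of u i z z'] zz(1,2) S(1) u(2) u'(2)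
        adj_commute[of E z u] adj_commute[of E z' u'] by blast
  qed
  ultimately have "card S \<le> card (sphere1 - {i, y})"
    using finite_sphere1 by (intro card_inj_on_le) auto
  also have "\<dots> = d - 2"
  proof -
    have "i \<noteq> y" using c y(2) by auto
    then show ?thesis using J(2) y(1) card_sphere1 finite_sphere1 by (simp add: card_Diff_subset)
  qed
  finally show ?thesis .
qed

lemma free_colour_not_seen:
  "c \<in> free_colours \<kappa> J \<sigma> i z \<Longrightarrow> w \<in> \<Union>(block ` J) \<Longrightarrow> adj E z w \<Longrightarrow> c \<noteq> \<sigma> w"
  using adjD(2) by (auto simp: free_colours_def neighbors_def)

lemma block_coloring_insertI:
  assumes \<sigma>: "block_coloring \<kappa> J \<sigma>" and J: "J \<subseteq> sphere1" "i \<in> sphere1" "i \<notin> J"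
    and f: "inj_on f (block i)" "\<forall>z\<in>block i. f z \<in> free_colours \<kappa> J \<sigma> i z"
  shows "block_coloring \<kappa> (insert i J) (override_on \<sigma> f (block i))" (is "block_coloring \<kappa> _ ?\<sigma>'")
proof -
  define U where "U = \<Union>(block ` J)"
  have disjoint: "block j \<inter> block i = {}" if "j \<in> J" for j
    using block_disjoint[of j i] that J by blast
  then have U_disjoint: "U \<inter> block i = {}" by (auto simp: U_def)
  have "?\<sigma>' ` block j \<subseteq> {1..d} - {\<kappa> j} \<and> inj_on ?\<sigma>' (block j)" if "j \<in> insert i J" for j
  proof (cases "j = i")
    case True
    have "?\<sigma>' ` block i = f ` block i" "inj_on ?\<sigma>' (block i) = inj_on f (block i)"
      by (simp_all cong: image_cong inj_on_cong)
    moreover have "f ` block i \<subseteq> {1..d} - {\<kappa> i}" using f(2) by (auto simp: free_colours_def)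
    ultimately show ?thesis using f(1) True by simp
  next
    case False
    then have "j \<in> J" using that by simp
    then have "v \<notin> block i" if "v \<in> block j" for v using disjoint that by blast
    then have "?\<sigma>' ` block j = \<sigma> ` block j" "inj_on ?\<sigma>' (block j) = inj_on \<sigma> (block j)"
      by (simp_all cong: image_cong inj_on_cong)
    then show ?thesis using \<sigma> \<open>j \<in> J\<close> by (simp add: block_coloring_def)
  qed
  moreover have "?\<sigma>' z \<noteq> ?\<sigma>' w" if zw: "z \<in> block i \<union> U" "w \<in> block i \<union> U" "adj E z w" for z w
  proof -
    have "adj E w z" using zw(3) by (simp add: adj_commute)
    consider "z \<in> block i" "w \<in> block i" | "z \<in> block i" "w \<in> U" | "z \<in> U" "w \<in> block i"
      | "z \<in> U" "w \<in> U"
      using zw(1,2) by blast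
    then show ?thesis
    proof cases
      case 1
      then show ?thesis using block_independent[OF J(2)] zw(3) by blast
    next
      case 2
      then have "f z \<in> free_colours \<kappa> J \<sigma> i z" "w \<in> \<Union>(block ` J)" "w \<notin> block i"
        using f(2) U_disjoint by (auto simp: U_def)
      then show ?thesis using 2 zw(3) free_colour_not_seen by simp
    next
      case 3
      then have "f w \<in> free_colours \<kappa> J \<sigma> i w" "z \<in> \<Union>(block ` J)" "z \<notin> block i"
        using f(2) U_disjoint by (auto simp: U_def)
      then show ?thesis using 3 \<open>adj E w z\<close> free_colour_not_seen by (metis override_on_apply_in override_on_apply_notin)
    next
      case 4
      then have "\<sigma> z \<noteq> \<sigma> w" using \<sigma> zw(3) unfolding block_coloring_def U_def by blast
      moreover have "z \<notin> block i" "w \<notin> block i" using 4 U_disjoint by blast+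
      ultimately show ?thesis by simp
    qed
  qed
  ultimately show ?thesis by (auto simp: block_coloring_def U_def)
qed

definition ball2_coloring :: "('a \<Rightarrow> nat) \<Rightarrow> ('a \<Rightarrow> nat) \<Rightarrow> 'a \<Rightarrow> nat" where
  "ball2_coloring \<kappa> \<sigma> v = (if v = x then 0 else if v \<in> sphere1 then \<kappa> v else \<sigma> v)"

lemma ball2_coloring_centre: "ball2_coloring \<kappa> \<sigma> x = 0"
  by (simp add: ball2_coloring_def)

lemma ball2_coloring_sphere1: "y \<in> sphere1 \<Longrightarrow> ball2_coloring \<kappa> \<sigma> y = \<kappa> y"
  using centre_notin_sphere1 by (auto simp: ball2_coloring_def)

lemma ball2_coloring_sphere2: "z \<in> sphere2 \<Longrightarrow> ball2_coloring \<kappa> \<sigma> z = \<sigma> z"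
  by (drule sphere2_disjoint) (simp add: ball2_coloring_def)

lemma ball2_coloring_adj_inner:
  assumes \<kappa>: "bij_betw \<kappa> sphere1 {1..d}" and \<sigma>: "block_coloring \<kappa> sphere1 \<sigma>"
    and uv: "u \<in> insert x sphere1" "adj E u v"
  shows "ball2_coloring \<kappa> \<sigma> u \<noteq> ball2_coloring \<kappa> \<sigma> v"
proof (cases "u = x")
  case True
  then have "v \<in> sphere1" using uv(2) by (simp add: mem_sphere1)
  moreover from this have "\<kappa> v \<in> {1..d}" using bij_betwE[OF \<kappa>] by blast
  ultimately show ?thesis using True by (simp add: ball2_coloring_centre ball2_coloring_sphere1)
next
  case False
  then have u: "u \<in> sphere1" using uv(1) by simp
  then have "\<kappa> u \<in> {1..d}" using bij_betwE[OF \<kappa>] by blast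
  show ?thesis
  proof (cases "v = x")
    case True
    then show ?thesis
      using u \<open>\<kappa> u \<in> {1..d}\<close> by (simp add: ball2_coloring_centre ball2_coloring_sphere1)
  next
    case False
    then have "v \<in> block u" using uv(2) by (simp add: mem_block)
    then have "v \<in> sphere2" "\<sigma> v \<noteq> \<kappa> u"
      using block_subset_sphere2[OF u] block_coloring_range[OF \<sigma> u] by auto
    then show ?thesis using u by (simp add: ball2_coloring_sphere1 ball2_coloring_sphere2)
  qed
qed

lemma proper_on_ball2_coloring:
  assumes \<kappa>: "bij_betw \<kappa> sphere1 {1..d}" and \<sigma>: "block_coloring \<kappa> sphere1 \<sigma>"
  shows "proper_on E (d + 1) (ball2 V E x) (ball2_coloring \<kappa> \<sigma>)"
proof -
  have "ball2_coloring \<kappa> \<sigma> v < d + 1" if v: "v \<in> ball2 V E x" for v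
  proof -
    consider "v = x" | "v \<in> sphere1" | y where "y \<in> sphere1" "v \<in> block y"
      using v sphere2_eq_UN_block by (auto simp: ball2_eq)
    then show ?thesis
    proof cases
      case 2
      then have "\<kappa> v \<in> {1..d}" using bij_betwE[OF \<kappa>] by blast
      then show ?thesis using 2 by (simp add: ball2_coloring_sphere1)
    next
      case (3 y)
      then have "v \<in> sphere2" "\<sigma> v \<in> {1..d}"
        using block_subset_sphere2 block_coloring_range[OF \<sigma> 3] by auto
      then show ?thesis by (simp add: ball2_coloring_sphere2)
    qed (simp add: ball2_coloring_centre)
  qed
  moreover have "ball2_coloring \<kappa> \<sigma> u \<noteq> ball2_coloring \<kappa> \<sigma> v"
    if uv: "u \<in> ball2 V E x" "v \<in> ball2 V E x" "adj E u v" for u v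
  proof -
    consider "u \<in> insert x sphere1" | "v \<in> insert x sphere1" | "u \<in> sphere2" "v \<in> sphere2"
      using uv(1,2) by (auto simp: ball2_eq)
    then show ?thesis
    proof cases
      case 1
      then show ?thesis using ball2_coloring_adj_inner[OF \<kappa> \<sigma> _ uv(3)] by blast
    next
      case 2
      have "adj E v u" using uv(3) by (simp add: adj_commute)
      then show ?thesis using ball2_coloring_adj_inner[OF \<kappa> \<sigma> 2] by (metis not_sym)
    next
      case 3
      then have "u \<in> \<Union>(block ` sphere1)" "v \<in> \<Union>(block ` sphere1)"
        using sphere2_eq_UN_block by simp_all
      then have "\<sigma> u \<noteq> \<sigma> v" using \<sigma> uv(3) unfolding block_coloring_def by blast
      then show ?thesis using 3 by (simp add: ball2_coloring_sphere2)
    qed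
  qed
  ultimately show ?thesis by (simp add: proper_on_def)
qed

lemma b_coloring_extends_ball2_coloring:
  assumes \<kappa>: "bij_betw \<kappa> sphere1 {1..d}" and \<sigma>: "block_coloring \<kappa> sphere1 \<sigma>"
    and col: "\<forall>v\<in>ball2 V E x. col v = ball2_coloring \<kappa> \<sigma> v" "proper_coloring V E (d + 1) col"
  shows "b_coloring V E (d + 1) col"
  unfolding b_coloring_def
proof (intro conjI allI impI)
  have col_x: "col x = 0" using col(1) ball2_coloring_centre by (simp add: ball2_eq)
  have col_y: "col y = \<kappa> y" if "y \<in> sphere1" for y
    using col(1) that ball2_coloring_sphere1 by (simp add: ball2_eq)
  fix i assume "i < d + 1"
  then consider "i = 0" | y where "y \<in> sphere1" "\<kappa> y = i"
  proof (cases "i = 0")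
    case False
    then have "i \<in> \<kappa> ` sphere1" using \<open>i < d + 1\<close> \<kappa> by (auto simp: bij_betw_def)
    then show ?thesis using that(2) by blast
  qed
  then show "\<exists>v\<in>V. col v = i \<and> {0..<d + 1} \<subseteq> col ` closed_nbhd V E v"
  proof cases
    case 1
    have "col ` closed_nbhd V E x = insert 0 (\<kappa> ` sphere1)"
      using col_x col_y by (simp add: closed_nbhd_def sphere1_def[symmetric] cong: image_cong)
    also have "\<dots> = {0..<d + 1}" using \<kappa> by (auto simp: bij_betw_def)
    finally show ?thesis using 1 col_x centre by auto
  next
    case (2 y)
    have "\<kappa> y \<in> {1..d}" using \<kappa> 2(1) bij_betwE by blast
    have "col ` block y = \<sigma> ` block y"
      using col(1) block_subset_sphere2[OF 2(1)] ball2_coloring_sphere2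
      by (intro image_cong) (auto simp: ball2_eq)
    also have "\<dots> = {1..d} - {\<kappa> y}" using block_colours_eq[OF \<sigma> 2(1) 2(1)] \<open>\<kappa> y \<in> {1..d}\<close> by simp
    finally have "col ` closed_nbhd V E y = insert (\<kappa> y) (insert 0 ({1..d} - {\<kappa> y}))"
      using col_x col_y[OF 2(1)] by (simp add: closed_nbhd_def neighbors_sphere1[OF 2(1)])
    then have "{0..<d + 1} \<subseteq> col ` closed_nbhd V E y" by auto
    moreover have "y \<in> V" using 2(1) adjD(2) by (simp add: mem_sphere1)
    ultimately show ?thesis using 2(2) col_y[OF 2(1)] by blast
  qed
qed (rule col(2))

end

locale few_hexagons = girth5_centre +
  assumes degree_ge_7: "7 \<le> d" and few_hexagons: "card hexagons \<le> 5"
begin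

definition rich :: "'a set" where
  "rich = {u \<in> sphere2. 2 \<le> card (inner_nbrs u)}"

lemma card_rich_le: "card rich \<le> 5"
proof -
  have "card rich = (\<Sum>u\<in>rich. 2 choose 2)" by simp
  also have "\<dots> \<le> (\<Sum>u\<in>rich. card (inner_nbrs u) choose 2)"
    by (intro sum_mono binomial_right_mono) (simp add: rich_def)
  also have "\<dots> \<le> (\<Sum>u\<in>sphere2. card (inner_nbrs u) choose 2)"
    using finite_sphere2 by (intro sum_mono2) (auto simp: rich_def)
  also have "\<dots> \<le> 5" using sum_inner_pairs_le_card_hexagons few_hexagons by simp
  finally show ?thesis .
qed

lemma inner_degree_le_3:
  assumes "u \<in> sphere2"
  shows "card (inner_nbrs u) \<le> 3"
proof (rule ccontr)
  assume "\<not> card (inner_nbrs u) \<le> 3"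
  then have "4 choose 2 \<le> card (inner_nbrs u) choose 2" by (intro binomial_right_mono) simp
  also have "\<dots> \<le> (\<Sum>u\<in>sphere2. card (inner_nbrs u) choose 2)"
    using assms finite_sphere2 by (intro member_le_sum) auto
  also have "\<dots> \<le> 5" using sum_inner_pairs_le_card_hexagons few_hexagons by simp
  finally show False by (simp add: choose_two)
qed

lemma rich_block_unique:
  assumes "y \<in> sphere1" "y' \<in> sphere1" "4 \<le> card (block y \<inter> rich)" "4 \<le> card (block y' \<inter> rich)"
  shows "y = y'"
proof (rule ccontr)
  assume "y \<noteq> y'"
  then have "card ((block y \<inter> rich) \<union> (block y' \<inter> rich)) = card (block y \<inter> rich) + card (block y' \<inter> rich)"
    using block_disjoint[OF assms(1,2)] finite_block by (intro card_Un_disjoint) auto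
  moreover have "card ((block y \<inter> rich) \<union> (block y' \<inter> rich)) \<le> card rich"
    using finite_sphere2 by (intro card_mono) (auto simp: rich_def)
  ultimately show False using assms(3,4) card_rich_le by linarith
qed

lemma card_colours_seen_twice:
  assumes J: "J \<subseteq> sphere1" "i \<in> sphere1" and rich_first: "J \<noteq> {} \<Longrightarrow> card (block i \<inter> rich) < 4"
    and S: "S \<subseteq> block i" "z \<in> S" and T: "2 \<le> card T"
    and seen: "\<And>z. z \<in> S \<Longrightarrow> T \<subseteq> \<sigma> ` (neighbors V E z \<inter> \<Union>(block ` J))"
  shows "card S < 4 \<and> card T \<le> 3"
proof -
  have card_T: "card T \<le> card (inner_nbrs z)" if "z \<in> S" for z
  proof -
    have "finite (neighbors V E z)" using simple by (rule finite_neighbors)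
    then have "card T \<le> card (\<sigma> ` (neighbors V E z \<inter> \<Union>(block ` J)))"
      using seen[OF that] by (intro card_mono) auto
    also have "\<dots> \<le> card (inner_nbrs z)" by (rule card_seen_colours_le_inner_degree[OF J(1)])
    finally show ?thesis .
  qed
  have "J \<noteq> {}"
  proof
    assume "J = {}"
    then have "T = {}" using seen[OF S(2)] by simp
    then show False using T by simp
  qed
  moreover have "S \<subseteq> block i \<inter> rich"
    using S(1) card_T T block_subset_sphere2[OF J(2)] by (fastforce simp: rich_def)
  ultimately have "card S < 4"
    using rich_first card_mono[of "block i \<inter> rich" S] finite_block by fastforce
  moreover have "card T \<le> 3"
    using card_T[OF S(2)] inner_degree_le_3 S block_subset_sphere2[OF J(2)] by fastforce
  ultimately show ?thesis by simp
qed

lemma card_colours_seen_by_all: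
  assumes \<kappa>: "bij_betw \<kappa> sphere1 {1..d}" and \<sigma>: "block_coloring \<kappa> J \<sigma>"
    and J: "J \<subseteq> sphere1" "i \<in> sphere1" "i \<notin> J"
    and rich_first: "J \<noteq> {} \<Longrightarrow> card (block i \<inter> rich) < 4"
    and S: "S \<subseteq> block i" and T: "T \<subseteq> {1..d} - {\<kappa> i}"
    and seen: "\<And>z. z \<in> S \<Longrightarrow> T \<subseteq> \<sigma> ` (neighbors V E z \<inter> \<Union>(block ` J))"
  shows "card T + card S < d"
proof (cases "S = {}")
  case True
  have "\<kappa> i \<in> {1..d}" using bij_betwE[OF \<kappa>] J(2) by blast
  then have "card T \<le> d - 1" using card_mono[OF _ T] by simp
  then show ?thesis using True degree_ge_7 by simp
next
  case False
  then obtain z where z: "z \<in> S" by blast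
  have card_S: "card S \<le> d - 1" using card_mono[OF finite_block S] card_block[OF J(2)] by simp
  consider "card T = 0" | "card T = 1" | "2 \<le> card T" by linarith
  then show ?thesis
  proof cases
    case 2
    then obtain c where "T = {c}" by (rule card_1_singletonE)
    then have "c \<in> {1..d} - {\<kappa> i}" "\<forall>z\<in>S. \<exists>j\<in>J. \<exists>u\<in>block j. adj E z u \<and> \<sigma> u = c"
      using T seen by (fastforce simp: neighbors_def)+
    then have "card S \<le> d - 2" using card_common_colour_neighbours[OF \<kappa> \<sigma> J _ S] by blast
    then show ?thesis using 2 degree_ge_7 by linarith
  next
    case 3
    then show ?thesis
      using card_colours_seen_twice[OF J(1,2) rich_first S z _ seen] degree_ge_7 by linarith
  qed (use card_S degree_ge_7 in linarith)
qed

text \<open>The colours missing from all free lists of S are seen by every vertex of S.\<close>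

lemma hall_condition_free_colours:
  assumes \<kappa>: "bij_betw \<kappa> sphere1 {1..d}" and \<sigma>: "block_coloring \<kappa> J \<sigma>"
    and J: "J \<subseteq> sphere1" "i \<in> sphere1" "i \<notin> J"
    and rich_first: "J \<noteq> {} \<Longrightarrow> card (block i \<inter> rich) < 4"
    and S: "S \<subseteq> block i"
  shows "card S \<le> card (\<Union>(free_colours \<kappa> J \<sigma> i ` S))"
proof -
  define T where "T = {1..d} - {\<kappa> i} - \<Union>(free_colours \<kappa> J \<sigma> i ` S)"
  have "\<kappa> i \<in> {1..d}" using \<kappa> J(2) bij_betwE by blast
  moreover have "\<Union>(free_colours \<kappa> J \<sigma> i ` S) \<subseteq> {1..d} - {\<kappa> i}"
    by (auto simp: free_colours_def)
  ultimately have "card T = (d - 1) - card (\<Union>(free_colours \<kappa> J \<sigma> i ` S))"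
    unfolding T_def by (subst card_Diff_subset) (auto intro: finite_subset)
  moreover have "card T + card S < d"
    by (rule card_colours_seen_by_all[OF assms]) (auto simp: T_def free_colours_def)
  ultimately show ?thesis by linarith
qed

lemma block_coloring_insert:
  assumes \<kappa>: "bij_betw \<kappa> sphere1 {1..d}" and \<sigma>: "block_coloring \<kappa> J \<sigma>"
    and J: "J \<subseteq> sphere1" "i \<in> sphere1" "i \<notin> J"
    and rich_first: "J \<noteq> {} \<Longrightarrow> card (block i \<inter> rich) < 4"
  shows "\<exists>\<sigma>'. block_coloring \<kappa> (insert i J) \<sigma>'"
proof -
  have "\<forall>z\<in>block i. finite (free_colours \<kappa> J \<sigma> i z)" by (simp add: free_colours_def)
  then obtain f where "inj_on f (block i)" "\<forall>z\<in>block i. f z \<in> free_colours \<kappa> J \<sigma> i z"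
    using hall_marriage[OF finite_block] hall_condition_free_colours[OF assms] by blast
  then show ?thesis using block_coloring_insertI[OF \<sigma> J] by blast
qed

lemma block_coloring_exists:
  assumes \<kappa>: "bij_betw \<kappa> sphere1 {1..d}"
  shows "\<exists>\<sigma>. block_coloring \<kappa> sphere1 \<sigma>"
proof -
  \<comment> \<open>colour first the block with four rich vertices, if there is one\<close>
  obtain i0 where i0: "i0 \<in> sphere1" "\<forall>y\<in>sphere1. 4 \<le> card (block y \<inter> rich) \<longrightarrow> y = i0"
  proof (cases "\<exists>y\<in>sphere1. 4 \<le> card (block y \<inter> rich)")
    case True
    then show ?thesis using rich_block_unique that by blast
  next
    case False
    moreover have "sphere1 \<noteq> {}" using card_sphere1 degree_ge_7 by auto
    ultimately show ?thesis using that by blast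
  qed
  have "\<exists>\<sigma>. block_coloring \<kappa> (insert i0 J) \<sigma>" if "finite J" "J \<subseteq> sphere1 - {i0}" for J
    using that
  proof (induction J rule: finite_induct)
    case empty
    show ?case using block_coloring_insert[OF \<kappa> block_coloring_empty] i0(1) by simp
  next
    case (insert j J)
    then obtain \<sigma> where "block_coloring \<kappa> (insert i0 J) \<sigma>" by blast
    moreover have "card (block j \<inter> rich) < 4" using i0(2) insert.prems by fastforce
    ultimately have "\<exists>\<sigma>'. block_coloring \<kappa> (insert j (insert i0 J)) \<sigma>'"
      using insert.prems insert.hyps i0(1) by (intro block_coloring_insert[OF \<kappa>]) auto
    then show ?case by (simp add: insert_commute)
  qed
  then show ?thesis using finite_sphere1 i0(1) by (metis finite_Diff insert_Diff order_refl)
qed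

theorem b_chromatic_eq: "b_chromatic V E = d + 1"
proof -
  have max_degree: "\<forall>v\<in>V. card (neighbors V E v) \<le> d" using regular by (simp add: regular_def)
  obtain \<kappa> where \<kappa>: "bij_betw \<kappa> sphere1 {1..d}"
    using finite_same_card_bij[OF finite_sphere1] card_sphere1 by (metis card_atLeastAtMost diff_Suc_1 finite_atLeastAtMost)
  obtain \<sigma> where \<sigma>: "block_coloring \<kappa> sphere1 \<sigma>" using block_coloring_exists[OF \<kappa>] by blast
  have "ball2 V E x \<subseteq> V" by (auto simp: ball2_def)
  then obtain col where col: "\<forall>v\<in>ball2 V E x. col v = ball2_coloring \<kappa> \<sigma> v" "proper_coloring V E (d + 1) col"
    using proper_on_extend[OF simple max_degree proper_on_ball2_coloring[OF \<kappa> \<sigma>]] by blast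
  show ?thesis
    unfolding b_chromatic_def
  proof (rule Greatest_equality)
    show "\<exists>c. b_coloring V E (d + 1) c" using b_coloring_extends_ball2_coloring[OF \<kappa> \<sigma> col] by blast
  qed (use b_coloring_le_max_degree[OF simple max_degree] in blast)
qed

end

theorem mainTheorem7:
  fixes V :: "'a set" and E :: "'a set set" and d :: nat
  assumes "simple_graph V E"
    and "d \<ge> 7"
    and "regular V E d"
    and "girth V E = 5"
    and "\<exists>x\<in>V. card {C \<in> cycles (ball2 V E x) (induced_edges E (ball2 V E x)) 6. x \<in> \<Union>C} \<le> 5"
  shows "b_chromatic V E = d + 1"
proof -
  obtain x where x: "x \<in> V"
    "card {C \<in> cycles (ball2 V E x) (induced_edges E (ball2 V E x)) 6. x \<in> \<Union>C} \<le> 5"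
    using assms(5) by blast
  have "cycles V E 3 = {}" "cycles V E 4 = {}"
    using cycles_below_girth[of 3 V E] cycles_below_girth[of 4 V E] assms(4)
    by (simp_all add: numeral_eq_enat)
  then interpret girth5_centre V E d x
    using assms(1,3) x(1) by unfold_locales
  interpret few_hexagons V E d x
    using assms(2) x(2) by unfold_locales (simp_all add: hexagons_def)
  show ?thesis by (rule b_chromatic_eq)
qed

end
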